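(* Let $p\equiv 3\pmod 4$ be a prime. Then $$\prod_{1\le i<j\le \frac{p-1}{2}}(j^2-i^2)\equiv 1\pmod p.$$ *)

theory Defs
  imports "HOL-Number_Theory.Number_Theory"
begin

end

theory Submission
  imports Defs
begin

text \<open>
  For \<open>j > 0\<close>, \<open>j \<Prod>\<^bsub>i<j\<^esub> (j\<^sup>2 - i\<^sup>2) = j \<Prod>\<^bsub>i<j\<^esub> (j - i)(j + i) = (2j - 1)!\<close>, so with
  \<open>n = (p - 1)/2\<close> the product multiplied by \<open>n!\<close> is \<open>\<Prod>\<^bsub>j=1..n\<^esub> (2j - 1)!\<close>. Wilson's theorem
  gives \<open>k! (p - 1 - k)! \<equiv> (-1)\<^sup>k\<^sup>+\<^sup>1 (mod p)\<close>, and \<open>(2j - 1) + (p - 2j) = p - 1\<close>, so the factors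
  for \<open>j\<close> and \<open>n + 1 - j\<close> multiply to \<open>1\<close>. As \<open>p \<equiv> 3 (mod 4)\<close>, \<open>n\<close> is odd and the unpaired
  middle factor is \<open>n!\<close>, which cancels because \<open>n < p\<close>.
\<close>

lemma prod_top_residues_cong:
  fixes p d :: nat
  assumes "d \<le> p"
  shows "[(\<Prod>i\<in>{p - d..<p}. int i) = (-1) ^ d * fact d] (mod int p)"
proof -
  have "(\<Prod>i\<in>{p - d..<p}. int i) = (\<Prod>m\<in>{1..d}. int (p - m))"
    by (rule prod.reindex_bij_witness[of _ "\<lambda>i. p - i" "\<lambda>m. p - m"]) (use assms in auto)
  also have "[\<dots> = (\<Prod>m\<in>{1..d}. - int m)] (mod int p)"
    by (rule cong_prod) (use assms in \<open>simp add: cong_iff_dvd_diff\<close>)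
  also have "(\<Prod>m\<in>{1..d}. - int m) = (-1) ^ d * fact d"
    by (simp add: prod_uminus fact_prod)
  finally show ?thesis .
qed

lemma fact_mult_fact_complement_cong:
  fixes p k :: nat
  assumes "prime p" "odd p" "k < p"
  shows "[fact k * fact (p - 1 - k) = ((-1) ^ (k + 1) :: int)] (mod int p)"
proof -
  have fact_int: "(fact n :: int) = (\<Prod>i\<in>{1..<n + 1}. int i)" for n
    by (simp add: fact_prod atLeastLessThanSuc_atLeastAtMost)
  have "fact (p - 1) = fact k * (\<Prod>i\<in>{k + 1..<p}. int i)"
    using prod.atLeastLessThan_concat[of 1 "k + 1" p int] assms
    by (simp add: fact_int)
  also have "[\<dots> = fact k * ((-1) ^ (p - 1 - k) * fact (p - 1 - k))] (mod int p)"
    using prod_top_residues_cong[of "p - 1 - k" p] assms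
    by (intro cong_mult cong_refl) (simp add: Suc_diff_Suc)
  also have "(-1 :: int) ^ (p - 1 - k) = (-1) ^ k"
    using assms by (simp add: minus_one_power_iff)
  finally have "[fact (p - 1) = (-1) ^ k * (fact k * fact (p - 1 - k) :: int)] (mod int p)"
    by (simp add: ac_simps)
  then have "[(-1) ^ k * (fact k * fact (p - 1 - k)) = (-1 :: int)] (mod int p)"
    using wilson_theorem[OF assms(1)] by (metis cong_sym cong_trans)
  then have "[(-1) ^ k * ((-1) ^ k * (fact k * fact (p - 1 - k))) = (-1) ^ k * (-1 :: int)] (mod int p)"
    by (rule cong_scalar_left)
  then show ?thesis
    by (simp flip: mult.assoc power_add)
qed

lemma int_mult_prod_square_diff:
  fixes j :: nat
  assumes "0 < j"
  shows "int j * (\<Prod>i\<in>{1..<j}. int j ^ 2 - int i ^ 2) = fact (2 * j - 1)"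
proof -
  have "int j * (\<Prod>i\<in>{1..<j}. int j ^ 2 - int i ^ 2) =
      (\<Prod>i\<in>{1..<j}. int (j - i)) * (int j * (\<Prod>i\<in>{1..<j}. int (j + i)))"
    by (simp add: prod.distrib[symmetric] power2_eq_square algebra_simps)
  also have "(\<Prod>i\<in>{1..<j}. int (j - i)) = (\<Prod>i\<in>{1..<j}. int i)"
    by (rule prod.reindex_bij_witness[of _ "\<lambda>i. j - i" "\<lambda>i. j - i"]) auto
  also have "int j * (\<Prod>i\<in>{1..<j}. int (j + i)) = (\<Prod>i\<in>{0..<j}. int (j + i))"
    using assms by (simp add: prod.atLeast_Suc_lessThan[of 0 j])
  also have "\<dots> = (\<Prod>i\<in>{j..<2 * j}. int i)"
    using prod.shift_bounds_nat_ivl[of int 0 j j] by (simp add: add.commute mult_2)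
  also have "(\<Prod>i\<in>{1..<j}. int i) * \<dots> = (\<Prod>i\<in>{1..<2 * j}. int i)"
    using assms by (simp add: prod.atLeastLessThan_concat)
  also have "\<dots> = fact (2 * j - 1)"
    using assms by (simp add: fact_prod atLeastLessThanSuc_atLeastAtMost[symmetric])
  finally show ?thesis .
qed

lemma fact_mult_prod_square_diff_pairs:
  fixes n :: nat
  shows "fact n * (\<Prod>(i, j) \<in> {(i, j). 1 \<le> i \<and> i < j \<and> j \<le> n}. int j ^ 2 - int i ^ 2)
           = (\<Prod>j\<in>{1..n}. fact (2 * j - 1) :: int)"
proof -
  have pairs: "{(i, j). 1 \<le> i \<and> i < j \<and> j \<le> n} = (\<lambda>(j, i). (i, j)) ` (SIGMA j:{1..n}. {1..<j})"
    by force
  have "(\<Prod>(i, j) \<in> {(i, j). 1 \<le> i \<and> i < j \<and> j \<le> n}. int j ^ 2 - int i ^ 2)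
          = (\<Prod>j\<in>{1..n}. \<Prod>i\<in>{1..<j}. int j ^ 2 - int i ^ 2)"
    unfolding pairs by (subst prod.reindex) (auto simp: inj_on_def prod.Sigma case_prod_unfold)
  moreover have "(fact n :: int) = (\<Prod>j\<in>{1..n}. int j)"
    by (simp add: fact_prod)
  moreover have "(\<Prod>j\<in>{1..n}. int j * (\<Prod>i\<in>{1..<j}. int j ^ 2 - int i ^ 2))
                   = (\<Prod>j\<in>{1..n}. fact (2 * j - 1))"
    by (rule prod.cong[OF refl int_mult_prod_square_diff]) simp
  ultimately show ?thesis
    by (simp add: prod.distrib[symmetric])
qed

lemma prod_symmetric_interval_cong:
  fixes f :: "nat \<Rightarrow> int"
  assumes "t \<le> c" and "\<And>s. 1 \<le> s \<Longrightarrow> s \<le> t \<Longrightarrow> [f (c - s) * f (c + s) = 1] (mod m)"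
  shows "[(\<Prod>j\<in>{c - t..c + t}. f j) = f c] (mod m)"
  using assms
proof (induction t)
  case 0
  then show ?case by simp
next
  case (Suc t)
  have interval: "{c - Suc t..c + Suc t} = insert (c - Suc t) (insert (c + Suc t) {c - t..c + t})"
    and lower: "c - Suc t \<notin> insert (c + Suc t) {c - t..c + t}"
    and upper: "c + Suc t \<notin> {c - t..c + t}"
    using Suc.prems(1) by auto
  have "(\<Prod>j\<in>{c - Suc t..c + Suc t}. f j)
          = f (c - Suc t) * f (c + Suc t) * (\<Prod>j\<in>{c - t..c + t}. f j)"
    unfolding interval
    by (simp add: prod.insert[OF _ lower] prod.insert[OF _ upper] mult.assoc del: add_Suc_right)
  also have "[\<dots> = 1 * f c] (mod m)"
    using Suc.IH Suc.prems Suc.prems(2)[of "Suc t"] by (intro cong_mult) simp_all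
  finally show ?case by simp
qed

lemma prod_fact_odd_cong:
  fixes p t :: nat
  assumes "prime p" and "p = 4 * t + 3"
  shows "[(\<Prod>j\<in>{1..2 * t + 1}. fact (2 * j - 1) :: int) = fact (2 * t + 1)] (mod int p)"
proof -
  have reflected_pair:
    "[fact (2 * (t + 1 - s) - 1) * fact (2 * (t + 1 + s) - 1) = (1 :: int)] (mod int p)"
    if "s \<le> t" for s
  proof -
    have "p - 1 - (2 * (t + 1 - s) - 1) = 2 * (t + 1 + s) - 1"
      and "2 * (t + 1 - s) - 1 + 1 = 2 * (t + 1 - s)"
      using assms(2) that by simp_all
    then show ?thesis
      using fact_mult_fact_complement_cong[OF assms(1), of "2 * (t + 1 - s) - 1"] assms(2) by simp
  qed
  have "[(\<Prod>j\<in>{t + 1 - t..t + 1 + t}. fact (2 * j - 1) :: int) = fact (2 * (t + 1) - 1)] (mod int p)"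
    using prod_symmetric_interval_cong[of t "t + 1" "\<lambda>j. fact (2 * j - 1)" "int p"] reflected_pair
    by simp
  moreover have "{t + 1 - t..t + 1 + t} = {1..2 * t + 1}" and "2 * (t + 1) - 1 = 2 * t + 1"
    by simp_all
  ultimately show ?thesis
    by (simp only:)
qed

lemma coprime_fact_prime:
  fixes p n :: nat
  assumes "prime p" and "n < p"
  shows "coprime (fact n :: int) (int p)"
proof -
  have "\<not> int p dvd fact n"
    using prime_dvd_fact_iff[OF assms(1), of n] assms(2) by (metis int_dvd_int_iff of_nat_fact not_le)
  moreover have "prime (int p)"
    using assms(1) by simp
  ultimately show ?thesis
    by (metis coprime_commute prime_imp_coprime)
qed

theorem mainTheorem6:
  fixes p :: nat
  assumes "prime p" and "[p = 3] (mod 4)"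
  shows "[(\<Prod>(i, j) \<in> {(i, j). 1 \<le> i \<and> i < j \<and> j \<le> (p - 1) div 2}.
            (int j ^ 2 - int i ^ 2)) = 1] (mod int p)"
proof -
  define t where "t = p div 4"
  define n where "n = (p - 1) div 2"
  have "p mod 4 = 3"
    using assms(2) by (simp add: cong_def)
  then have p: "p = 4 * t + 3"
    using div_mult_mod_eq[of p 4] unfolding t_def by linarith
  then have n: "n = 2 * t + 1"
    by (simp add: n_def)
  have "[fact n * (\<Prod>(i, j) \<in> {(i, j). 1 \<le> i \<and> i < j \<and> j \<le> n}. int j ^ 2 - int i ^ 2)
          = fact n * 1] (mod int p)"
    using prod_fact_odd_cong[OF assms(1) p]
    unfolding fact_mult_prod_square_diff_pairs n mult_1_right .
  moreover have "coprime (fact n :: int) (int p)"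
    using assms(1) by (rule coprime_fact_prime) (simp add: n p)
  ultimately show ?thesis
    unfolding n_def by (simp only: cong_mult_lcancel)
qed

end
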